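(* Let $A_5$ be the Cayley-Dickson algebra of 32-nions with canonical basis $e_0,\dots,e_{31}$. Then: (i) the 31 imaginary units split into ten units each lying on exactly nine defective triples (namely $e_a$, $a\in\{7,11,13,14,19,21,22,25,26,28\}$), fifteen units each lying on exactly seven defective triples (namely $e_a$, $a\in\{3,5,6,9,10,12,15,17,18,20,23,24,27,29,30\}$), and six units lying on no defective triple (namely $e_1,e_2,e_4,e_8,e_{16},e_{31}$); (ii) the incidence structure $\mathcal{C}_5$ whose points are the fifteen units of the second kind and whose lines are the defective triples consisting solely of such units is a $(15_4,20_3)$-configuration isomorphic to the combinatorial Grassmannian $G_2(6)$; (iii) there is a bijection $\varphi$ from the set of geometric hyperplanes of $\mathcal{C}_5$ onto $\{e_1,\dots,e_{31}\}$ mapping the set of lines of the Veldkamp space $\mathcal{V}(\mathcal{C}_5)$ bijectively onto the set of distinguished triples of $A_5$ (so $\mathcal{V}(\mathcal{C}_5)\cong\mathrm{PG}(4,2)$), such that the geometric hyperplanes with $6$ points (two disjoint lines), $7$ points (a point together with all points not collinear with it) and $10$ points (a copy of the Desargues configuration $G_2(5)$) are mapped onto the units of the first, second and third kind in (i), respectively.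
   Context: Cayley-Dickson algebras: $A_0=\mathbb{R}$ with trivial conjugation; $A_{N+1}$ is the set of ordered pairs $(x,y)$ with $x,y\in A_N$, with conjugation $(x,y)^*=(x^*,-y)$ and multiplication $(x,y)(X,Y)=(xX-Yy^*,\,x^*Y+Xy)$. The canonical basis of $A_0$ is $e_0=1$; if $e_0,\dots,e_{2^N-1}$ is the canonical basis of $A_N$, the canonical basis of $A_{N+1}$ is $e_a=(e_a,0)$ and $e_{2^N+a}=(0,e_a)$ for $0\le a\le 2^N-1$. The imaginary units of $A_N$ are $e_1,\dots,e_{2^N-1}$. A distinguished triple is a set $\{e_a,e_b,e_c\}$ with $1\le a<b<c\le 2^N-1$ and $e_ae_b=\pm e_c$; it is called ordinary if $a+b=c$ and defective if $a+b\neq c$. A $(v_r,b_k)$-configuration is a point-line incidence structure with $v$ points and $b$ lines, each line having $k$ points, each point on $r$ lines, two distinct points on at most one common line. The combinatorial Grassmannian $G_2(n)$ is the point-line incidence structure whose points are the $2$-element subsets of $\{1,\dots,n\}$, whose lines are the $3$-element subsets, incidence being inclusion ($G_2(5)$ is the Desargues configuration). A geometric hyperplane of a point-line incidence structure is a proper subset $H$ of the point set such that every line is either contained in $H$ or meets $H$ in exactly one point. The Veldkamp space $\mathcal{V}(\mathcal{C})$ has as points the geometric hyperplanes of $\mathcal{C}$; for distinct hyperplanes $H',H''$ the Veldkamp line $H'H''$ is the set of all geometric hyperplanes $H$ with $H=H'$, $H=H''$, or $H'\cap H''=H'\cap H=H''\cap H$. *)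

theory Defs
  imports Complex_Main
begin

text \<open>An element of A_N is represented by its coordinate function with respect to
the canonical basis e_0,...,e_(2^N-1): a function nat => real, whose values at
indices >= 2^N are irrelevant (all operations below produce 0 there).
The pair (x,y) of A_(N+1) corresponds to the coordinate function whose first
2^N coordinates are those of x and whose next 2^N coordinates are those of y;
this is exactly the canonical basis convention e_a = (e_a,0), e_(2^N+a) = (0,e_a).\<close>

type_synonym cd = "nat \<Rightarrow> real"

definition cd_pair :: "nat \<Rightarrow> cd \<Rightarrow> cd \<Rightarrow> cd" where
  "cd_pair N x y = (\<lambda>i. if i < 2^N then x i else if i < 2^(Suc N) then y (i - 2^N) else 0)"

definition cd_fst :: "nat \<Rightarrow> cd \<Rightarrow> cd" where
  "cd_fst N z = (\<lambda>i. if i < 2^N then z i else 0)"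

definition cd_snd :: "nat \<Rightarrow> cd \<Rightarrow> cd" where
  "cd_snd N z = (\<lambda>i. if i < 2^N then z (2^N + i) else 0)"

fun cd_conj :: "nat \<Rightarrow> cd \<Rightarrow> cd" where
  "cd_conj 0 z = (\<lambda>i. if i = 0 then z 0 else 0)"
| "cd_conj (Suc N) z =
     cd_pair N (cd_conj N (cd_fst N z)) (\<lambda>i. - cd_snd N z i)"

fun cd_mult :: "nat \<Rightarrow> cd \<Rightarrow> cd \<Rightarrow> cd" where
  "cd_mult 0 z w = (\<lambda>i. if i = 0 then z 0 * w 0 else 0)"
| "cd_mult (Suc N) z w =
     (let x = cd_fst N z; y = cd_snd N z; X = cd_fst N w; Y = cd_snd N w in
      cd_pair N (\<lambda>i. cd_mult N x X i - cd_mult N Y (cd_conj N y) i)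
                (\<lambda>i. cd_mult N (cd_conj N x) Y i + cd_mult N X y i))"

definition cd_unit :: "nat \<Rightarrow> cd" where
  "cd_unit a = (\<lambda>i. if i = a then 1 else 0)"

text \<open>Distinguished triples of A_N, each recorded by its set of indices {a,b,c}
(the unit e_a is identified with its index a).\<close>
definition distinguished_triples :: "nat \<Rightarrow> nat set set" where
  "distinguished_triples N =
     {{a, b, c} | a b c. 1 \<le> a \<and> a < b \<and> b < c \<and> c \<le> 2^N - 1 \<and>
        (cd_mult N (cd_unit a) (cd_unit b) = cd_unit c \<or>
         cd_mult N (cd_unit a) (cd_unit b) = (\<lambda>i. - cd_unit c i))}"

definition defective_triples :: "nat \<Rightarrow> nat set set" where
  "defective_triples N =
     {{a, b, c} | a b c. 1 \<le> a \<and> a < b \<and> b < c \<and> c \<le> 2^N - 1 \<and>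
        (cd_mult N (cd_unit a) (cd_unit b) = cd_unit c \<or>
         cd_mult N (cd_unit a) (cd_unit b) = (\<lambda>i. - cd_unit c i)) \<and> a + b \<noteq> c}"

definition is_configuration ::
  "'a set \<Rightarrow> 'a set set \<Rightarrow> nat \<Rightarrow> nat \<Rightarrow> nat \<Rightarrow> nat \<Rightarrow> bool" where
  "is_configuration P L v r b k \<longleftrightarrow>
     finite P \<and> card P = v \<and> finite L \<and> card L = b \<and>
     (\<forall>l\<in>L. l \<subseteq> P \<and> card l = k) \<and>
     (\<forall>p\<in>P. card {l\<in>L. p \<in> l} = r) \<and>
     (\<forall>p\<in>P. \<forall>q\<in>P. p \<noteq> q \<longrightarrow> card {l\<in>L. p \<in> l \<and> q \<in> l} \<le> 1)"

definition incidence_iso ::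
  "'a set \<Rightarrow> 'b set \<Rightarrow> ('a \<Rightarrow> 'b \<Rightarrow> bool) \<Rightarrow>
   'c set \<Rightarrow> 'd set \<Rightarrow> ('c \<Rightarrow> 'd \<Rightarrow> bool) \<Rightarrow> bool" where
  "incidence_iso P1 L1 I1 P2 L2 I2 \<longleftrightarrow>
     (\<exists>f g. bij_betw f P1 P2 \<and> bij_betw g L1 L2 \<and>
        (\<forall>p\<in>P1. \<forall>l\<in>L1. I1 p l \<longleftrightarrow> I2 (f p) (g l)))"

definition G2_points :: "nat \<Rightarrow> nat set set" where
  "G2_points n = {S. S \<subseteq> {1..n} \<and> card S = 2}"

definition G2_lines :: "nat \<Rightarrow> nat set set" where
  "G2_lines n = {S. S \<subseteq> {1..n} \<and> card S = 3}"

definition geom_hyperplanes :: "'a set \<Rightarrow> 'a set set \<Rightarrow> 'a set set" where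
  "geom_hyperplanes P L =
     {H. H \<subset> P \<and> (\<forall>l\<in>L. l \<subseteq> H \<or> card (l \<inter> H) = 1)}"

definition veldkamp_line :: "'a set \<Rightarrow> 'a set set \<Rightarrow> 'a set \<Rightarrow> 'a set \<Rightarrow> 'a set set" where
  "veldkamp_line P L H1 H2 =
     {H \<in> geom_hyperplanes P L. H = H1 \<or> H = H2 \<or>
        (H1 \<inter> H2 = H1 \<inter> H \<and> H1 \<inter> H2 = H2 \<inter> H)}"

definition veldkamp_lines :: "'a set \<Rightarrow> 'a set set \<Rightarrow> 'a set set set" where
  "veldkamp_lines P L =
     {veldkamp_line P L H1 H2 | H1 H2.
        H1 \<in> geom_hyperplanes P L \<and> H2 \<in> geom_hyperplanes P L \<and> H1 \<noteq> H2}"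

end

theory Submission
  imports Defs
begin

text \<open>In every Cayley-Dickson algebra \<open>e\<^sub>a e\<^sub>b = \<plusminus>e\<^bsub>a \<oplus> b\<^esub>\<close> (bitwise exclusive or), so the
  distinguished triples of \<open>A\<^sub>5\<close> are the lines \<open>{a, b, a \<oplus> b}\<close> of \<open>PG(4, 2)\<close>, and such a
  triple with \<open>a < b < a \<oplus> b\<close> is defective iff \<open>a\<close> and \<open>b\<close> share a bit. Label the unit with
  index \<open>2\<^sup>i + 2\<^sup>j\<close> (\<open>i < j < 5\<close>) or \<open>31 - 2\<^sup>i\<close> (\<open>j = 5\<close>) by the pair \<open>{i, j} \<subseteq> {0..5}\<close>:
  these are the fifteen units of the second kind, and the defective triples among them are the
  triangles \<open>{ij, ik, jk}\<close>, so \<open>C\<^sub>5 \<cong> G\<^sub>2(6)\<close>. A proper subset meets every line in one or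
  three points iff membership is additive along lines; such subsets are exactly the sets \<open>H\<^sub>c\<close>
  of pairs not separated by the bipartition \<open>{i. bit c i}\<close> of \<open>{0..5}\<close>, \<open>0 < c < 32\<close>. Since
  \<open>H\<^sub>c \<inter> H\<^sub>d \<subseteq> H\<^bsub>c \<oplus> d\<^esub>\<close>, the Veldkamp line through \<open>H\<^sub>c\<close> and \<open>H\<^sub>d\<close> is
  \<open>{H\<^sub>c, H\<^sub>d, H\<^bsub>c \<oplus> d\<^esub>}\<close>, and \<open>c \<mapsto> H\<^sub>c\<close> is the required bijection. For a bipartition of
  sizes \<open>1 + 5\<close>, \<open>2 + 4\<close>, \<open>3 + 3\<close> the set \<open>H\<^sub>c\<close> is a \<open>G\<^sub>2(5)\<close>, a point together with the
  pairs disjoint from it, or two disjoint triangles.\<close>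

lemma bit_imp_less_of_less_power: "(a::nat) < 2^N \<Longrightarrow> bit a n \<Longrightarrow> n < N"
  by (metis bit_take_bit_iff take_bit_nat_eq_self_iff)

lemma bit_power_add:
  assumes "(a::nat) < 2^N"
  shows "bit (2^N + a) n \<longleftrightarrow> n = N \<or> bit a n"
proof -
  have "2^N + a = or (2^N) a"
    by (rule disjunctive_add) (use assms in \<open>auto simp: bit_exp_iff dest: bit_imp_less_of_less_power\<close>)
  then show ?thesis by (simp add: bit_or_iff bit_exp_iff)
qed

lemma xor_less_power: "(a::nat) < 2^N \<Longrightarrow> b < 2^N \<Longrightarrow> xor a b < 2^N"
  by (metis take_bit_nat_eq_self_iff take_bit_xor)

lemma xor_power_add:
  fixes a b :: nat
  assumes "a < 2^N" "b < 2^N"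
  shows "xor (2^N + a) b = 2^N + xor a b"
    and "xor a (2^N + b) = 2^N + xor a b"
    and "xor (2^N + a) (2^N + b) = xor a b"
  using assms
  by (auto intro!: bit_eqI simp: bit_power_add bit_xor_iff xor_less_power
           dest: bit_imp_less_of_less_power)

lemma xor_cancel_left: "xor (a::nat) (xor a b) = b"
  by (simp flip: xor.assoc)

lemma xor_cancel_right: "xor (xor (a::nat) b) b = a"
  by (simp add: xor.assoc)

lemma xor_eq_0_iff: "xor (a::nat) b = 0 \<longleftrightarrow> a = b"
  by (metis xor.comm_neutral xor_cancel_left xor_self_eq)

lemma exists_bit_less_power:
  assumes "0 < c" "(c::nat) < 2^N"
  obtains k where "k < N" "bit c k"
proof -
  have "\<exists>k. bit c k"
  proof (rule ccontr)
    assume "\<nexists>k. bit c k"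
    then have "c = 0" by (intro bit_eqI) auto
    with assms(1) show False by simp
  qed
  then show thesis
    using that assms(2) bit_imp_less_of_less_power by blast
qed

section \<open>Products of basis units\<close>

definition scaled_unit :: "real \<Rightarrow> nat \<Rightarrow> cd" where
  "scaled_unit s a = (\<lambda>i. if i = a then s else 0)"

lemma scaled_unit_zero [simp]: "scaled_unit 0 a = (\<lambda>_. 0)"
  by (simp add: scaled_unit_def)

lemma cd_unit_eq_scaled_unit: "cd_unit a = scaled_unit 1 a"
  by (simp add: cd_unit_def scaled_unit_def)

lemma scaled_unit_uminus: "(\<lambda>i. - scaled_unit s a i) = scaled_unit (- s) a"
  by (auto simp: scaled_unit_def)

lemma scaled_unit_eq_iff: "s \<noteq> 0 \<Longrightarrow> scaled_unit s a = scaled_unit t b \<longleftrightarrow> a = b \<and> s = t"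
  by (auto simp: scaled_unit_def fun_eq_iff split: if_splits)

lemma cd_pair_zero [simp]: "cd_pair N (\<lambda>_. 0) (\<lambda>_. 0) = (\<lambda>_. 0)"
  by (simp add: cd_pair_def fun_eq_iff)

lemma cd_fst_zero [simp]: "cd_fst N (\<lambda>_. 0) = (\<lambda>_. 0)"
  and cd_snd_zero [simp]: "cd_snd N (\<lambda>_. 0) = (\<lambda>_. 0)"
  by (simp_all add: cd_fst_def cd_snd_def)

lemma cd_conj_zero [simp]: "cd_conj N (\<lambda>_. 0) = (\<lambda>_. 0)"
  by (induction N) simp_all

lemma cd_mult_zero_left [simp]: "cd_mult N (\<lambda>_. 0) w = (\<lambda>_. 0)"
  and cd_mult_zero_right [simp]: "cd_mult N z (\<lambda>_. 0) = (\<lambda>_. 0)"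
  by (induction N arbitrary: z w) (simp_all add: Let_def, simp_all add: fun_eq_iff)

lemma cd_fst_scaled_unit:
  "cd_fst N (scaled_unit s a) = (if a < 2^N then scaled_unit s a else (\<lambda>_. 0))"
  by (auto simp: cd_fst_def scaled_unit_def)

lemma cd_snd_scaled_unit:
  "a < 2^Suc N \<Longrightarrow> cd_snd N (scaled_unit s a) = (if a < 2^N then (\<lambda>_. 0) else scaled_unit s (a - 2^N))"
  by (auto simp: cd_snd_def scaled_unit_def fun_eq_iff)

lemma cd_pair_scaled_unit_left: "a < 2^N \<Longrightarrow> cd_pair N (scaled_unit s a) (\<lambda>_. 0) = scaled_unit s a"
  by (auto simp: cd_pair_def scaled_unit_def fun_eq_iff)

lemma cd_pair_scaled_unit_right:
  "b < 2^N \<Longrightarrow> cd_pair N (\<lambda>_. 0) (scaled_unit s b) = scaled_unit s (2^N + b)"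
  by (auto simp: cd_pair_def scaled_unit_def fun_eq_iff)

lemma cd_conj_scaled_unit:
  "a < 2^N \<Longrightarrow> cd_conj N (scaled_unit s a) = scaled_unit (if a = 0 then s else - s) a"
proof (induction N arbitrary: s a)
  case 0
  then show ?case by (auto simp: scaled_unit_def)
next
  case (Suc N)
  show ?case
  proof (cases "a < 2^N")
    case True
    then show ?thesis
      using Suc by (simp add: cd_fst_scaled_unit cd_snd_scaled_unit cd_pair_scaled_unit_left)
  next
    case False
    then have "a = 2^N + (a - 2^N)" "a - 2^N < 2^N" "a \<noteq> 0"
      using Suc.prems by auto
    then show ?thesis
      using Suc.prems
      by (simp add: cd_fst_scaled_unit cd_snd_scaled_unit scaled_unit_uminus cd_pair_scaled_unit_right)
  qed
qed

text \<open>The recursion follows the doubling formula, with \<open>e\<^sub>a\<^sup>* = e\<^sub>a\<close> for \<open>a = 0\<close> and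
  \<open>e\<^sub>a\<^sup>* = -e\<^sub>a\<close> otherwise.\<close>
fun unit_product_sign :: "nat \<Rightarrow> nat \<Rightarrow> nat \<Rightarrow> real" where
  "unit_product_sign 0 a b = 1"
| "unit_product_sign (Suc N) a b =
     (if a < 2^N then
        if b < 2^N then unit_product_sign N a b
        else (if a = 0 then 1 else -1) * unit_product_sign N a (b - 2^N)
      else if b < 2^N then unit_product_sign N b (a - 2^N)
      else (if a = 2^N then -1 else 1) * unit_product_sign N (b - 2^N) (a - 2^N))"

lemma unit_product_sign_cases: "unit_product_sign N a b = 1 \<or> unit_product_sign N a b = -1"
  by (induction N a b rule: unit_product_sign.induct) auto

lemma cd_mult_scaled_unit:
  "a < 2^N \<Longrightarrow> b < 2^N \<Longrightarrow>
   cd_mult N (scaled_unit s a) (scaled_unit t b) = scaled_unit (s * t * unit_product_sign N a b) (xor a b)"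
proof (induction N arbitrary: s t a b)
  case 0
  then show ?case by (auto simp: scaled_unit_def)
next
  case (Suc N)
  note simps = Let_def cd_fst_scaled_unit cd_snd_scaled_unit cd_conj_scaled_unit Suc.IH
    scaled_unit_uminus cd_pair_scaled_unit_left cd_pair_scaled_unit_right xor_less_power
  consider "a < 2^N" "b < 2^N"
    | b' where "a < 2^N" "b = 2^N + b'" "b' < 2^N"
    | a' where "a = 2^N + a'" "a' < 2^N" "b < 2^N"
    | a' b' where "a = 2^N + a'" "a' < 2^N" "b = 2^N + b'" "b' < 2^N"
    using Suc.prems by (metis add_diff_inverse_nat add_less_imp_less_left mult_2 power_Suc)
  then show ?case
  proof cases
    case 1
    then show ?thesis using Suc.prems by (simp add: simps)
  next
    case 2
    then show ?thesis using Suc.prems by (simp add: simps xor_power_add)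
  next
    case 3
    then show ?thesis using Suc.prems by (simp add: simps xor_power_add xor.commute mult.commute)
  next
    case 4
    then show ?thesis using Suc.prems by (simp add: simps xor_power_add xor.commute mult.commute)
  qed
qed

lemma cd_unit_mult_cd_unit:
  "a < 2^N \<Longrightarrow> b < 2^N \<Longrightarrow>
   cd_mult N (cd_unit a) (cd_unit b) = scaled_unit (unit_product_sign N a b) (xor a b)"
  by (simp add: cd_unit_eq_scaled_unit cd_mult_scaled_unit)

lemma cd_unit_product_eq_pm_unit_iff:
  assumes "a < 2^N" "b < 2^N"
  shows "(cd_mult N (cd_unit a) (cd_unit b) = cd_unit c \<or>
          cd_mult N (cd_unit a) (cd_unit b) = (\<lambda>i. - cd_unit c i)) \<longleftrightarrow> c = xor a b"
  using unit_product_sign_cases[of N a b] cd_unit_mult_cd_unit[OF assms]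
  by (auto simp: cd_unit_eq_scaled_unit scaled_unit_uminus scaled_unit_eq_iff)

section \<open>Distinguished and defective triples\<close>

definition xor_triple :: "nat \<times> nat \<Rightarrow> nat set" where
  "xor_triple p = (case p of (a, b) \<Rightarrow> {a, b, xor a b})"

lemma xor_triple_simp [simp]: "xor_triple (a, b) = {a, b, xor a b}"
  by (simp add: xor_triple_def)

lemma finite_xor_triple [simp]: "finite (xor_triple p)"
  by (cases p) simp

lemma unit_triple_iff:
  "(1 \<le> a \<and> a < b \<and> b < c \<and> c \<le> 2^N - 1 \<and>
    (cd_mult N (cd_unit a) (cd_unit b) = cd_unit c \<or>
     cd_mult N (cd_unit a) (cd_unit b) = (\<lambda>i. - cd_unit c i))) \<longleftrightarrow>
   (0 < a \<and> a < b \<and> b < xor a b \<and> xor a b < 2^N \<and> c = xor a b)"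
  using cd_unit_product_eq_pm_unit_iff[of a N b c] by (auto simp: less_le_trans)

lemma distinguished_triples_eq_xor:
  "distinguished_triples N =
     {{a, b, xor a b} | a b. 0 < a \<and> a < b \<and> b < xor a b \<and> xor a b < 2^N}"
  unfolding distinguished_triples_def unit_triple_iff by auto

lemma defective_triples_eq_xor:
  "defective_triples N =
     {{a, b, xor a b} | a b. 0 < a \<and> a < b \<and> b < xor a b \<and> xor a b < 2^N \<and> a + b \<noteq> xor a b}"
proof -
  have "(1 \<le> a \<and> a < b \<and> b < c \<and> c \<le> 2^N - 1 \<and>
         (cd_mult N (cd_unit a) (cd_unit b) = cd_unit c \<or>
          cd_mult N (cd_unit a) (cd_unit b) = (\<lambda>i. - cd_unit c i)) \<and> a + b \<noteq> c) \<longleftrightarrow>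
        (0 < a \<and> a < b \<and> b < xor a b \<and> xor a b < 2^N \<and> a + b \<noteq> xor a b \<and> c = xor a b)"
    for a b c
    using unit_triple_iff[of a b c N] by auto
  then show ?thesis
    unfolding defective_triples_def by auto
qed

lemma xor_triple_sorted:
  fixes x y :: nat
  assumes "0 < x" "0 < y" "x \<noteq> y"
  shows "\<exists>a b. 0 < a \<and> a < b \<and> b < xor a b \<and> {x, y, xor x y} = {a, b, xor a b}"
proof -
  define z where "z = xor x y"
  have xor_z: "xor x y = z" "xor y x = z" "xor x z = y" "xor z x = y" "xor y z = x" "xor z y = x"
    by (simp_all add: z_def xor_cancel_left xor_cancel_right xor.commute xor.left_commute)
  have "0 < z"
    using assms(3) by (metis z_def neq0_conv xor_eq_0_iff)
  have "z \<noteq> x" "z \<noteq> y"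
    using assms xor_z by auto
  then consider "x < y" "y < z" | "y < x" "x < z" | "x < z" "z < y" | "z < x" "x < y"
    | "y < z" "z < x" | "z < y" "y < x"
    using assms(3) by (metis linorder_neqE_nat)
  then show ?thesis
  proof cases
    case 1 with assms show ?thesis by (intro exI[of _ x] exI[of _ y]) (simp add: xor_z)
  next
    case 2 with assms show ?thesis by (intro exI[of _ y] exI[of _ x]) (simp add: xor_z insert_commute)
  next
    case 3 with assms show ?thesis by (intro exI[of _ x] exI[of _ z]) (simp add: xor_z insert_commute)
  next
    case 4 with \<open>0 < z\<close> show ?thesis by (intro exI[of _ z] exI[of _ x]) (simp add: xor_z insert_commute)
  next
    case 5 with assms show ?thesis by (intro exI[of _ y] exI[of _ z]) (simp add: xor_z insert_commute)
  next
    case 6 with \<open>0 < z\<close> show ?thesis by (intro exI[of _ z] exI[of _ y]) (simp add: xor_z insert_commute)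
  qed
qed

lemma distinguished_triples_eq:
  "distinguished_triples N =
     xor_triple ` {(x, y). 0 < x \<and> 0 < y \<and> x \<noteq> y \<and> x < 2^N \<and> y < 2^N}"
proof (intro set_eqI iffI)
  fix T
  assume "T \<in> distinguished_triples N"
  then obtain a b where ab: "T = {a, b, xor a b}" "0 < a" "a < b" "b < xor a b" "xor a b < 2^N"
    unfolding distinguished_triples_eq_xor by blast
  then show "T \<in> xor_triple ` {(x, y). 0 < x \<and> 0 < y \<and> x \<noteq> y \<and> x < 2^N \<and> y < 2^N}"
    by (intro image_eqI[of _ _ "(a, b)"]) auto
next
  fix T
  assume "T \<in> xor_triple ` {(x, y). 0 < x \<and> 0 < y \<and> x \<noteq> y \<and> x < 2^N \<and> y < 2^N}"
  then obtain x y where T: "T = {x, y, xor x y}" and xy: "0 < x" "0 < y" "x \<noteq> y" "x < 2^N" "y < 2^N"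
    by auto
  obtain a b where ab: "0 < a" "a < b" "b < xor a b" "T = {a, b, xor a b}"
    using xor_triple_sorted[OF xy(1-3)] T by auto
  have "xor x y < 2^N"
    using xy(4,5) by (rule xor_less_power)
  moreover have "xor a b \<in> {x, y, xor x y}"
    using ab(4) T by blast
  ultimately have "xor a b < 2^N"
    using xy(4,5) by auto
  with ab show "T \<in> distinguished_triples N"
    unfolding distinguished_triples_eq_xor by (intro CollectI exI[of _ a] exI[of _ b]) auto
qed

lemma sorted_triple_eq_iff:
  fixes a b c :: "'a :: linorder"
  assumes "a < b" "b < c" "a' < b'" "b' < c'"
  shows "{a, b, c} = {a', b', c'} \<longleftrightarrow> a = a' \<and> b = b' \<and> c = c'"
proof
  assume eq: "{a, b, c} = {a', b', c'}"
  have "a \<in> {a', b', c'}" "b \<in> {a', b', c'}" "c \<in> {a', b', c'}"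
    "a' \<in> {a, b, c}" "b' \<in> {a, b, c}" "c' \<in> {a, b, c}"
    using eq by blast+
  with assms show "a = a' \<and> b = b' \<and> c = c'" by auto
qed simp

lemma inj_on_xor_triple: "inj_on xor_triple {(a, b). a < b \<and> b < xor a b}"
proof (rule inj_onI, clarify)
  fix a b a' b'
  assume "a < b" "b < xor a b" "a' < b'" "b' < xor a' b'" "xor_triple (a, b) = xor_triple (a', b')"
  then show "a = a' \<and> b = b'"
    using sorted_triple_eq_iff[of a b "xor a b" a' b' "xor a' b'"] by simp
qed

lemma card_filter_xor_triples:
  assumes "distinct ps" "set ps \<subseteq> {(a, b). a < b \<and> b < xor a b}"
  shows "card {T \<in> xor_triple ` set ps. P T} = length (filter (\<lambda>p. P (xor_triple p)) ps)"
proof -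
  have "{T \<in> xor_triple ` set ps. P T} = xor_triple ` set (filter (\<lambda>p. P (xor_triple p)) ps)"
    by auto
  moreover have "inj_on xor_triple (set (filter (\<lambda>p. P (xor_triple p)) ps))"
    by (rule inj_on_subset[OF inj_on_xor_triple]) (use assms(2) in auto)
  ultimately show ?thesis
    using assms(1) distinct_card[of "filter (\<lambda>p. P (xor_triple p)) ps"] by (simp add: card_image)
qed

lemma card_xor_triples:
  assumes "distinct ps" "set ps \<subseteq> {(a, b). a < b \<and> b < xor a b}"
  shows "card (xor_triple ` set ps) = length ps"
  using card_filter_xor_triples[OF assms, of "\<lambda>_. True"] by simp

definition defective_pairs_5 :: "(nat \<times> nat) list" where
  "defective_pairs_5 =
     [(a, b). a \<leftarrow> [1..<32], b \<leftarrow> [Suc a..<32], b < xor a b \<and> xor a b < 32 \<and> a + b \<noteq> xor a b]"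

lemma defective_pairs_5_eq:
  "defective_pairs_5 =
    [(3,5), (3,9), (3,13), (3,17), (3,21), (3,25), (3,29), (5,9), (5,11), (5,17), (5,19), (5,25),
     (5,27), (6,10), (6,11), (6,18), (6,19), (6,26), (6,27), (7,9), (7,10), (7,11), (7,17), (7,18),
     (7,19), (7,25), (7,26), (7,27), (9,17), (9,19), (9,21), (9,23), (10,18), (10,19), (10,22),
     (10,23), (11,17), (11,18), (11,19), (11,21), (11,22), (11,23), (12,20), (12,21), (12,22),
     (12,23), (13,17), (13,19), (13,20), (13,21), (13,22), (13,23), (14,18), (14,19), (14,20),
     (14,21), (14,22), (14,23), (15,17), (15,18), (15,19), (15,20), (15,21), (15,22), (15,23)]"
  unfolding defective_pairs_5_def by code_simp

lemma set_defective_pairs_5: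
  "set defective_pairs_5 =
     {(a, b). 0 < a \<and> a < b \<and> b < xor a b \<and> xor a b < 2^5 \<and> a + b \<noteq> xor a b}"
  by (auto simp: defective_pairs_5_def)

lemma defective_triples_5: "defective_triples 5 = xor_triple ` set defective_pairs_5"
  unfolding defective_triples_eq_xor set_defective_pairs_5 by (auto simp: image_def)

lemma distinct_defective_pairs_5: "distinct defective_pairs_5"
  by (simp add: defective_pairs_5_eq)

lemma defective_pairs_5_sorted: "set defective_pairs_5 \<subseteq> {(a, b). a < b \<and> b < xor a b}"
  by (auto simp: set_defective_pairs_5)

lemma card_defective_triples_5_through:
  "\<forall>a\<in>{7, 11, 13, 14, 19, 21, 22, 25, 26, 28}. card {T \<in> defective_triples 5. a \<in> T} = 9"
  "\<forall>a\<in>{3, 5, 6, 9, 10, 12, 15, 17, 18, 20, 23, 24, 27, 29, 30}. card {T \<in> defective_triples 5. a \<in> T} = 7"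
  "\<forall>a\<in>{1, 2, 4, 8, 16, 31}. card {T \<in> defective_triples 5. a \<in> T} = 0"
  unfolding defective_triples_5
    card_filter_xor_triples[OF distinct_defective_pairs_5 defective_pairs_5_sorted]
  by (simp_all add: defective_pairs_5_eq)

lemma line_meets_hyperplane_iff:
  assumes "x \<noteq> y" "y \<noteq> z" "x \<noteq> z"
  shows "({x, y, z} \<subseteq> H \<or> card ({x, y, z} \<inter> H) = 1) \<longleftrightarrow> (x \<in> H \<longleftrightarrow> (y \<in> H \<longleftrightarrow> z \<in> H))"
  using assms by (cases "x \<in> H"; cases "y \<in> H"; cases "z \<in> H") auto

lemma mem_geom_hyperplanes_xor_triples:
  assumes "S \<subseteq> {(a, b). a < b \<and> b < xor a b}"
  shows "H \<in> geom_hyperplanes P (xor_triple ` S) \<longleftrightarrow>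
    H \<subset> P \<and> (\<forall>(a, b)\<in>S. a \<in> H \<longleftrightarrow> (b \<in> H \<longleftrightarrow> xor a b \<in> H))"
proof -
  have "(xor_triple p \<subseteq> H \<or> card (xor_triple p \<inter> H) = 1) \<longleftrightarrow>
        (case p of (a, b) \<Rightarrow> a \<in> H \<longleftrightarrow> (b \<in> H \<longleftrightarrow> xor a b \<in> H))" if "p \<in> S" for p
    using that assms line_meets_hyperplane_iff by fastforce
  then show ?thesis
    unfolding geom_hyperplanes_def by auto
qed

lemma finite_G2: "finite (G2_points n)" "finite (G2_lines n)"
  by (rule finite_subset[of _ "Pow {1..n}"]; auto simp: G2_points_def G2_lines_def)+

lemma card_G2: "card (G2_points n) = n choose 2" "card (G2_lines n) = n choose 3"
  unfolding G2_points_def G2_lines_def using n_subsets[of "{1..n}"] by simp_all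

text \<open>The three points of a line carry the three 2-subsets of the union of their labels.\<close>
lemma incidence_iso_G2I:
  assumes "inj_on f P" "\<forall>p\<in>P. f p \<subseteq> {1..n} \<and> card (f p) = 2" "card P = n choose 2"
    and "\<forall>l\<in>L. l \<subseteq> P \<and> card l = 3" "\<forall>l\<in>L. \<Union>(f ` l) \<subseteq> {1..n} \<and> card (\<Union>(f ` l)) = 3"
    and "card L = n choose 3"
  shows "incidence_iso P L (\<in>) (G2_points n) (G2_lines n) (\<subseteq>)"
proof -
  define g where "g l = \<Union>(f ` l)" for l
  have incidence: "p \<in> l \<longleftrightarrow> f p \<subseteq> g l" if "p \<in> P" "l \<in> L" for p l
  proof
    assume "f p \<subseteq> g l"
    have l: "l \<subseteq> P" "card l = 3" and gl: "card (g l) = 3"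
      using assms(4,5) that by (auto simp: g_def)
    then have fin: "finite (g l)"
      by (metis card.infinite zero_neq_numeral)
    have sub: "f ` l \<subseteq> {S. S \<subseteq> g l \<and> card S = 2}"
      using l assms(2) by (auto simp: g_def)
    have "card (f ` l) = 3"
      using card_image[OF inj_on_subset[OF assms(1) l(1)]] l(2) by simp
    also have "3 = card {S. S \<subseteq> g l \<and> card S = 2}"
      using n_subsets[OF fin, of 2] gl by (simp add: numeral_eq_Suc)
    finally have "f ` l = {S. S \<subseteq> g l \<and> card S = 2}"
      using fin sub by (intro card_subset_eq) simp_all
    then have "f p \<in> f ` l"
      using \<open>f p \<subseteq> g l\<close> assms(2) that(1) by simp
    then show "p \<in> l"
      using assms(1) l(1) that(1) by (auto dest: inj_onD)
  qed (auto simp: g_def)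
  have "inj_on g L"
  proof (rule inj_onI)
    fix l l' assume "l \<in> L" "l' \<in> L" "g l = g l'"
    then show "l = l'"
      using incidence assms(4) by blast
  qed
  have "f ` P \<subseteq> G2_points n"
    using assms(2) by (auto simp: G2_points_def)
  moreover have "card (f ` P) = card (G2_points n)"
    using card_image[OF assms(1)] assms(3) card_G2(1) by simp
  ultimately have "bij_betw f P (G2_points n)"
    using assms(1) card_subset_eq[OF finite_G2(1)] by (simp add: bij_betw_def)
  have "g ` L \<subseteq> G2_lines n"
    using assms(5) by (auto simp: G2_lines_def g_def)
  moreover have "card (g ` L) = card (G2_lines n)"
    using card_image[OF \<open>inj_on g L\<close>] assms(6) card_G2(2) by simp
  ultimately have "bij_betw g L (G2_lines n)"
    using \<open>inj_on g L\<close> card_subset_eq[OF finite_G2(2)] by (simp add: bij_betw_def)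
  with \<open>bij_betw f P (G2_points n)\<close> show ?thesis
    unfolding incidence_iso_def using incidence by blast
qed

definition doubleton :: "'a \<times> 'a \<Rightarrow> 'a set" where
  "doubleton p = {fst p, snd p}"

lemma inj_on_doubleton_comp:
  fixes q :: "'b \<Rightarrow> 'a :: linorder \<times> 'a"
  assumes "inj_on q A" "\<forall>a\<in>A. fst (q a) < snd (q a)"
  shows "inj_on (doubleton \<circ> q) A"
proof (rule inj_onI)
  fix a b assume ab: "a \<in> A" "b \<in> A" "(doubleton \<circ> q) a = (doubleton \<circ> q) b"
  moreover have "fst (q a) < snd (q a)" "fst (q b) < snd (q b)"
    using assms(2) ab(1,2) by auto
  ultimately have "q a = q b"
    by (cases "q a"; cases "q b") (auto simp: doubleton_def doubleton_eq_iff)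
  then show "a = b"
    using assms(1) ab by (auto dest: inj_onD)
qed

section \<open>The configuration \<open>C\<^sub>5\<close>\<close>

definition pair_point :: "nat \<Rightarrow> nat \<Rightarrow> nat" where
  "pair_point i j = (if j = 5 then 31 - 2^i else 2^i + 2^j)"

definition index_pairs :: "(nat \<times> nat) list" where
  "index_pairs = [(i, j). j \<leftarrow> [1..<6], i \<leftarrow> [0..<j]]"

definition C5_points :: "nat list" where
  "C5_points = map (\<lambda>(i, j). pair_point i j) index_pairs"

definition point_pair :: "nat \<Rightarrow> nat \<times> nat" where
  "point_pair a = the (map_of (zip C5_points index_pairs) a)"

lemma mem_index_pairs: "(i, j) \<in> set index_pairs \<longleftrightarrow> i < j \<and> j \<le> 5"
  by (auto simp: index_pairs_def image_iff)

lemma index_pairs_eq: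
  "index_pairs = [(0,1), (0,2), (1,2), (0,3), (1,3), (2,3), (0,4), (1,4), (2,4), (3,4),
    (0,5), (1,5), (2,5), (3,5), (4,5)]"
  unfolding index_pairs_def by code_simp

lemma C5_points_eq: "C5_points = [3, 5, 6, 9, 10, 12, 17, 18, 20, 24, 30, 29, 27, 23, 15]"
  by (simp add: C5_points_def index_pairs_eq pair_point_def)

lemma set_C5_points: "set C5_points = {3, 5, 6, 9, 10, 12, 15, 17, 18, 20, 23, 24, 27, 29, 30}"
  by (simp add: C5_points_eq insert_commute)

lemma distinct_C5_points: "distinct C5_points"
  by (simp add: C5_points_eq)

lemma card_C5_points: "card (set C5_points) = 15"
  by (simp add: distinct_card[OF distinct_C5_points] C5_points_eq)

lemma point_pair_pair_point: "(i, j) \<in> set index_pairs \<Longrightarrow> point_pair (pair_point i j) = (i, j)"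
proof -
  have "\<forall>(i, j)\<in>set index_pairs. point_pair (pair_point i j) = (i, j)"
    by (simp add: index_pairs_eq point_pair_def C5_points_eq pair_point_def)
  then show "(i, j) \<in> set index_pairs \<Longrightarrow> point_pair (pair_point i j) = (i, j)"
    by blast
qed

lemma point_pair_eq:
  "point_pair = (\<lambda>a. the (map_of [(3, (0,1)), (5, (0,2)), (6, (1,2)), (9, (0,3)), (10, (1,3)),
     (12, (2,3)), (17, (0,4)), (18, (1,4)), (20, (2,4)), (24, (3,4)), (30, (0,5)), (29, (1,5)),
     (27, (2,5)), (23, (3,5)), (15, (4,5))] a))"
  by (simp add: fun_eq_iff point_pair_def C5_points_eq index_pairs_eq)

lemma C5_point_cases:
  assumes "a \<in> set C5_points"
  obtains i j where "i < j" "j \<le> 5" "a = pair_point i j" "point_pair a = (i, j)"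
  using assms point_pair_pair_point by (auto simp: C5_points_def mem_index_pairs)

lemma pair_point_mem_C5_points: "(i, j) \<in> set index_pairs \<Longrightarrow> pair_point i j \<in> set C5_points"
  by (force simp: C5_points_def)

definition triple_list :: "nat \<times> nat \<Rightarrow> nat list" where
  "triple_list p = (case p of (a, b) \<Rightarrow> [a, b, xor a b])"

lemma set_triple_list [simp]: "set (triple_list p) = xor_triple p"
  by (cases p) (simp add: triple_list_def)

definition C5_line_pairs :: "(nat \<times> nat) list" where
  "C5_line_pairs = filter (\<lambda>p. xor_triple p \<subseteq> set C5_points) defective_pairs_5"

abbreviation C5_lines :: "nat set set" where
  "C5_lines \<equiv> xor_triple ` set C5_line_pairs"

lemma C5_line_pairs_eq:
  "C5_line_pairs = [(3,5), (3,9), (3,17), (3,29), (5,9), (5,17), (5,27), (6,10), (6,18), (6,27),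
     (9,17), (9,23), (10,18), (10,23), (12,20), (12,23), (15,17), (15,18), (15,20), (15,23)]"
  by (simp add: C5_line_pairs_def defective_pairs_5_eq set_C5_points)

lemma C5_line_triples_eq:
  "map triple_list C5_line_pairs =
    [[3,5,6], [3,9,10], [3,17,18], [3,29,30], [5,9,12], [5,17,20], [5,27,30], [6,10,12],
     [6,18,20], [6,27,29], [9,17,24], [9,23,30], [10,18,24], [10,23,29], [12,20,24], [12,23,27],
     [15,17,30], [15,18,29], [15,20,27], [15,23,24]]"
  by (simp add: C5_line_pairs_eq triple_list_def)

lemma defective_triples_within_C5_points:
  "{T \<in> defective_triples 5. T \<subseteq> set C5_points} = C5_lines"
  by (auto simp: defective_triples_5 C5_line_pairs_def)

lemma distinct_C5_line_pairs: "distinct C5_line_pairs"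
  by (simp add: C5_line_pairs_def distinct_defective_pairs_5)

lemma C5_line_pairs_sorted: "set C5_line_pairs \<subseteq> {(a, b). a < b \<and> b < xor a b}"
  using defective_pairs_5_sorted by (auto simp: C5_line_pairs_def)

lemma C5_line_subset: "l \<in> C5_lines \<Longrightarrow> l \<subseteq> set C5_points \<and> card l = 3"
  using C5_line_pairs_sorted by (auto simp: C5_line_pairs_def)

lemma card_C5_lines: "card C5_lines = 20"
  unfolding card_xor_triples[OF distinct_C5_line_pairs C5_line_pairs_sorted]
  by (simp add: C5_line_pairs_eq)

lemma C5_is_configuration:
  "is_configuration (set C5_points) C5_lines 15 4 20 3"
proof -
  have "\<forall>p\<in>set C5_points. length (filter (\<lambda>l. p \<in> xor_triple l) C5_line_pairs) = 4"
    and "\<forall>p\<in>set C5_points. \<forall>q\<in>set C5_points. p \<noteq> q \<longrightarrow>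
           length (filter (\<lambda>l. p \<in> xor_triple l \<and> q \<in> xor_triple l) C5_line_pairs) \<le> 1"
    by (simp_all add: C5_points_eq C5_line_pairs_eq)
  then show ?thesis
    unfolding is_configuration_def
      card_filter_xor_triples[OF distinct_C5_line_pairs C5_line_pairs_sorted]
    using card_C5_points card_C5_lines C5_line_subset by simp
qed

definition skip_index :: "nat \<Rightarrow> nat \<Rightarrow> nat" where
  "skip_index m i = (if i < m then i + 1 else i)"

text \<open>The point with pair \<open>{i, j}\<close> gets the label \<open>{i + 1, j + 1}\<close>, except that indices above
  \<open>m\<close> are not shifted; for \<open>m \<le> 5\<close> this renumbers \<open>{0..5} - {m}\<close> as \<open>{1..5}\<close>.\<close>
definition point_label :: "nat \<Rightarrow> nat \<Rightarrow> nat set" where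
  "point_label m = doubleton \<circ> map_prod (skip_index m) (skip_index m) \<circ> point_pair"

lemma C5_iso_G2_6:
  "incidence_iso (set C5_points) C5_lines (\<in>) (G2_points 6) (G2_lines 6) (\<subseteq>)"
proof (rule incidence_iso_G2I)
  show "inj_on (point_label 6) (set C5_points)"
    unfolding point_label_def comp_assoc
    by (rule inj_on_doubleton_comp)
       (simp_all add: distinct_map[symmetric] C5_points_eq point_pair_eq skip_index_def)
  show "\<forall>p\<in>set C5_points. point_label 6 p \<subseteq> {1..6} \<and> card (point_label 6 p) = 2"
    by (simp add: C5_points_eq point_label_def point_pair_eq skip_index_def doubleton_def)
  show "card (set C5_points) = 6 choose 2"
    by (simp add: card_C5_points binomial_Suc_Suc numeral_eq_Suc)
  show "\<forall>l\<in>C5_lines. l \<subseteq> set C5_points \<and> card l = 3"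
    using C5_line_subset by blast
  show "\<forall>l\<in>C5_lines.
          \<Union>(point_label 6 ` l) \<subseteq> {1..6} \<and> card (\<Union>(point_label 6 ` l)) = 3"
    by (simp add: C5_line_pairs_eq point_label_def point_pair_eq skip_index_def doubleton_def
        card_insert_if)
  show "card C5_lines = 6 choose 3"
    by (simp add: card_C5_lines binomial_Suc_Suc numeral_eq_Suc)
qed

section \<open>The geometric hyperplanes of \<open>C\<^sub>5\<close>\<close>

abbreviation C5_hyperplanes :: "nat set set" where
  "C5_hyperplanes \<equiv> geom_hyperplanes (set C5_points) C5_lines"

text \<open>A number \<open>c < 32\<close> encodes the bipartition of \<open>{0..5}\<close> into \<open>{i. bit c i}\<close> and its
  complement, which contains \<open>5\<close>.\<close>
definition unseparated :: "nat \<Rightarrow> nat \<Rightarrow> bool" where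
  "unseparated c a \<longleftrightarrow> (case point_pair a of (i, j) \<Rightarrow> bit c i \<longleftrightarrow> bit c j)"

definition bipartition_hyperplane :: "nat \<Rightarrow> nat set" where
  "bipartition_hyperplane c = set (filter (unseparated c) C5_points)"

lemma unseparated_pair_point:
  "(i, j) \<in> set index_pairs \<Longrightarrow> unseparated c (pair_point i j) \<longleftrightarrow> (bit c i \<longleftrightarrow> bit c j)"
  by (simp add: unseparated_def point_pair_pair_point)

lemma unseparated_xor: "unseparated (xor c d) a \<longleftrightarrow> (unseparated c a \<longleftrightarrow> unseparated d a)"
  by (auto simp: unseparated_def bit_xor_iff split: prod.split)

lemma bipartition_hyperplane_0: "bipartition_hyperplane 0 = set C5_points"
  by (auto simp: bipartition_hyperplane_def unseparated_def split: prod.split)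

lemma unseparated_C5_line:
  assumes "(a, b) \<in> set C5_line_pairs"
  shows "unseparated c a \<longleftrightarrow> (unseparated c b \<longleftrightarrow> unseparated c (xor a b))"
proof -
  have "\<forall>(a, b)\<in>set C5_line_pairs. unseparated c a \<longleftrightarrow> (unseparated c b \<longleftrightarrow> unseparated c (xor a b))"
    by (simp add: C5_line_pairs_eq unseparated_def point_pair_eq) blast
  with assms show ?thesis by blast
qed

lemma mem_C5_hyperplanes_iff:
  "H \<in> C5_hyperplanes \<longleftrightarrow>
   H \<subset> set C5_points \<and> (\<forall>(a, b)\<in>set C5_line_pairs. a \<in> H \<longleftrightarrow> (b \<in> H \<longleftrightarrow> xor a b \<in> H))"
  by (rule mem_geom_hyperplanes_xor_triples[OF C5_line_pairs_sorted])

lemma bipartition_hyperplane_mem: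
  assumes "c \<in> {1..31}"
  shows "bipartition_hyperplane c \<in> C5_hyperplanes"
proof -
  obtain k where k: "k < 5" "bit c k"
    using assms exists_bit_less_power[of c 5] by auto
  have "\<not> bit c 5"
    using assms bit_imp_less_of_less_power[of c 5 5] by auto
  then have "pair_point k 5 \<in> set C5_points - bipartition_hyperplane c"
    using k mem_index_pairs[of k 5] pair_point_mem_C5_points unseparated_pair_point
    by (auto simp: bipartition_hyperplane_def)
  then have "bipartition_hyperplane c \<subset> set C5_points"
    by (auto simp: bipartition_hyperplane_def)
  moreover have "(a, b) \<in> set C5_line_pairs \<Longrightarrow> xor_triple (a, b) \<subseteq> set C5_points" for a b
    by (simp add: C5_line_pairs_def)
  ultimately show ?thesis
    unfolding mem_C5_hyperplanes_iff using unseparated_C5_line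
    by (auto simp: bipartition_hyperplane_def)
qed

lemma bipartition_hyperplane_subset_imp_eq:
  assumes cd: "c \<in> {1..31}" "d \<in> {1..31}"
    and sub: "bipartition_hyperplane c \<subseteq> bipartition_hyperplane d"
  shows "c = d"
proof -
  have same: "bit d i \<longleftrightarrow> bit d j" if "bit c i \<longleftrightarrow> bit c j" "i \<le> 5" "j \<le> 5" for i j
  proof -
    have "bit d i \<longleftrightarrow> bit d j" if "bit c i \<longleftrightarrow> bit c j" "i < j" "j \<le> 5" for i j
    proof -
      have "(i, j) \<in> set index_pairs"
        using that(2,3) by (simp add: mem_index_pairs)
      then have "pair_point i j \<in> bipartition_hyperplane c"
        using that(1) pair_point_mem_C5_points unseparated_pair_point
        by (simp add: bipartition_hyperplane_def)
      with sub \<open>(i, j) \<in> set index_pairs\<close> show ?thesis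
        using unseparated_pair_point by (auto simp: bipartition_hyperplane_def)
    qed
    with that show ?thesis
      by (cases i j rule: linorder_cases) auto
  qed
  have no_bit_5: "\<not> bit c 5" "\<not> bit d 5"
    using cd bit_imp_less_of_less_power[of c 5 5] bit_imp_less_of_less_power[of d 5 5] by auto
  have d_imp_c: "bit d i \<Longrightarrow> bit c i" if "i < 5" for i
    using same[of i 5] no_bit_5 that by auto
  obtain k where k: "k < 5" "bit d k"
    using cd exists_bit_less_power[of d 5] by auto
  have c_imp_d: "bit c i \<Longrightarrow> bit d i" if "i < 5" for i
    using same[of i k] k d_imp_c[of k] that by auto
  have "bit c n \<longleftrightarrow> bit d n" for n
  proof (cases "n < 5")
    case False
    then show ?thesis
      using cd bit_imp_less_of_less_power[of c 5 n] bit_imp_less_of_less_power[of d 5 n] by auto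
  qed (use c_imp_d d_imp_c in blast)
  then show "c = d"
    by (rule bit_eqI)
qed

lemma inj_on_bipartition_hyperplane: "inj_on bipartition_hyperplane {1..31}"
  by (rule inj_onI) (simp add: bipartition_hyperplane_subset_imp_eq)

text \<open>The colouring \<open>c\<close> of \<open>H\<close> records which of the five points \<open>{i, 5}\<close> lie outside \<open>H\<close>;
  the lines \<open>{{i, j}, {i, 5}, {j, 5}}\<close> then decide the membership of all other points.\<close>
lemma C5_hyperplane_eq_bipartition_hyperplane:
  assumes "H \<in> C5_hyperplanes"
  obtains c where "c \<in> {1..31}" "H = bipartition_hyperplane c"
proof -
  have proper: "H \<subset> set C5_points"
    and parity: "\<forall>(a, b)\<in>set C5_line_pairs. a \<in> H \<longleftrightarrow> (b \<in> H \<longleftrightarrow> xor a b \<in> H)"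
    using assms mem_C5_hyperplanes_iff by auto
  have apex: "\<forall>(i, j)\<in>set index_pairs. j < 5 \<longrightarrow>
      (pair_point i j \<in> H \<longleftrightarrow> (pair_point i 5 \<in> H \<longleftrightarrow> pair_point j 5 \<in> H))"
    using parity by (simp add: C5_line_pairs_eq index_pairs_eq pair_point_def) blast
  define c :: nat where "c = horner_sum of_bool 2 (map (\<lambda>i. pair_point i 5 \<notin> H) [0..<5])"
  have bit_c: "bit c i \<longleftrightarrow> i < 5 \<and> pair_point i 5 \<notin> H" for i
    by (auto simp: c_def bit_horner_sum_bit_iff)
  have "a \<in> H \<longleftrightarrow> unseparated c a" if a: "a \<in> set C5_points" for a
  proof -
    obtain i j where ij: "i < j" "j \<le> 5" "a = pair_point i j" "point_pair a = (i, j)"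
      using a by (rule C5_point_cases)
    show ?thesis
    proof (cases "j = 5")
      case False
      then have "(i, j) \<in> set index_pairs" "j < 5"
        using ij by (auto simp: mem_index_pairs)
      then have "pair_point i j \<in> H \<longleftrightarrow> (pair_point i 5 \<in> H \<longleftrightarrow> pair_point j 5 \<in> H)"
        using apex by fastforce
      then show ?thesis
        using ij \<open>j < 5\<close> by (auto simp: unseparated_def bit_c)
    qed (use ij in \<open>auto simp: unseparated_def bit_c\<close>)
  qed
  then have H: "H = bipartition_hyperplane c"
    using proper by (auto simp: bipartition_hyperplane_def)
  moreover have "c \<noteq> 0"
    using H proper bipartition_hyperplane_0 by auto
  moreover have "c < 2^5"
    using horner_sum_of_bool_2_less[of "map (\<lambda>i. pair_point i 5 \<notin> H) [0..<5]"] by (simp add: c_def)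
  ultimately show thesis
    by (intro that[of c]) auto
qed

lemma C5_hyperplanes_eq:
  "C5_hyperplanes = bipartition_hyperplane ` {1..31}"
  using bipartition_hyperplane_mem C5_hyperplane_eq_bipartition_hyperplane by blast

section \<open>The Veldkamp space of \<open>C\<^sub>5\<close>\<close>

lemma xor_mem_range:
  "c \<in> {1..31} \<Longrightarrow> d \<in> {1..31} \<Longrightarrow> c \<noteq> d \<Longrightarrow> xor c d \<in> {1..31::nat}"
  using xor_less_power[of c 5 d] xor_eq_0_iff[of c d] by auto

lemma bipartition_hyperplane_inter_xor:
  "bipartition_hyperplane c \<inter> bipartition_hyperplane d =
     bipartition_hyperplane c \<inter> bipartition_hyperplane (xor c d)"
  "bipartition_hyperplane c \<inter> bipartition_hyperplane d =
     bipartition_hyperplane d \<inter> bipartition_hyperplane (xor c d)"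
  by (auto simp: bipartition_hyperplane_def unseparated_xor)

text \<open>If \<open>H\<^sub>e\<close> is on the Veldkamp line of \<open>H\<^sub>c\<close> and \<open>H\<^sub>d\<close> but \<open>e \<noteq> c \<oplus> d\<close>, then \<open>H\<^sub>c\<close>
  and \<open>H\<^sub>d\<close> are both contained in \<open>H\<^bsub>c \<oplus> d \<oplus> e\<^esub>\<close>, which forces \<open>c = d\<close>.\<close>
lemma veldkamp_line_C5:
  assumes cd: "c \<in> {1..31}" "d \<in> {1..31}" "c \<noteq> d"
  shows "veldkamp_line (set C5_points) C5_lines (bipartition_hyperplane c) (bipartition_hyperplane d) =
    bipartition_hyperplane ` {c, d, xor c d}"
proof (intro set_eqI iffI)
  fix H
  assume "H \<in> veldkamp_line (set C5_points) C5_lines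
    (bipartition_hyperplane c) (bipartition_hyperplane d)"
  then have H: "H \<in> C5_hyperplanes"
    and on_line: "H = bipartition_hyperplane c \<or> H = bipartition_hyperplane d \<or>
      (bipartition_hyperplane c \<inter> bipartition_hyperplane d = bipartition_hyperplane c \<inter> H \<and>
       bipartition_hyperplane c \<inter> bipartition_hyperplane d = bipartition_hyperplane d \<inter> H)"
    unfolding veldkamp_line_def by auto
  obtain e where e: "e \<in> {1..31}" "H = bipartition_hyperplane e"
    using H by (rule C5_hyperplane_eq_bipartition_hyperplane)
  show "H \<in> bipartition_hyperplane ` {c, d, xor c d}"
  proof (rule ccontr)
    assume "H \<notin> bipartition_hyperplane ` {c, d, xor c d}"
    then have "e \<noteq> xor c d"
      and inter: "bipartition_hyperplane c \<inter> bipartition_hyperplane d =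
                  bipartition_hyperplane c \<inter> bipartition_hyperplane e"
                 "bipartition_hyperplane c \<inter> bipartition_hyperplane d =
                  bipartition_hyperplane d \<inter> bipartition_hyperplane e"
      using on_line e(2) by auto
    define x where "x = xor (xor c d) e"
    have "x \<in> {1..31}"
      using xor_mem_range[OF xor_mem_range[OF cd] e(1)] \<open>e \<noteq> xor c d\<close> by (simp add: x_def)
    have "bipartition_hyperplane c \<subseteq> bipartition_hyperplane x"
      "bipartition_hyperplane d \<subseteq> bipartition_hyperplane x"
      using inter by (auto simp: set_eq_iff bipartition_hyperplane_def x_def unseparated_xor)
    then have "c = x" "d = x"
      using cd \<open>x \<in> {1..31}\<close> bipartition_hyperplane_subset_imp_eq by auto
    with cd(3) show False by simp
  qed
next
  fix H
  assume "H \<in> bipartition_hyperplane ` {c, d, xor c d}"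
  moreover have "bipartition_hyperplane ` {c, d, xor c d} \<subseteq> C5_hyperplanes"
    using cd xor_mem_range[OF cd] bipartition_hyperplane_mem by auto
  ultimately show "H \<in> veldkamp_line (set C5_points) C5_lines
    (bipartition_hyperplane c) (bipartition_hyperplane d)"
    unfolding veldkamp_line_def using bipartition_hyperplane_inter_xor[of c d] by blast
qed

lemma veldkamp_lines_C5:
  "veldkamp_lines (set C5_points) C5_lines =
     (\<lambda>p. bipartition_hyperplane ` xor_triple p) ` {(c, d). c \<in> {1..31} \<and> d \<in> {1..31} \<and> c \<noteq> d}"
proof (intro set_eqI iffI)
  fix V
  assume "V \<in> veldkamp_lines (set C5_points) C5_lines"
  then obtain c d where "c \<in> {1..31}" "d \<in> {1..31}" "c \<noteq> d"
    "V = veldkamp_line (set C5_points) C5_lines (bipartition_hyperplane c) (bipartition_hyperplane d)"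
    unfolding veldkamp_lines_def C5_hyperplanes_eq by blast
  then show "V \<in> (\<lambda>p. bipartition_hyperplane ` xor_triple p) `
      {(c, d). c \<in> {1..31} \<and> d \<in> {1..31} \<and> c \<noteq> d}"
    using veldkamp_line_C5 by (intro image_eqI[of _ _ "(c, d)"]) auto
next
  fix V
  assume "V \<in> (\<lambda>p. bipartition_hyperplane ` xor_triple p) `
      {(c, d). c \<in> {1..31} \<and> d \<in> {1..31} \<and> c \<noteq> d}"
  then obtain c d where cd: "c \<in> {1..31}" "d \<in> {1..31}" "c \<noteq> d"
    and V: "V = bipartition_hyperplane ` {c, d, xor c d}"
    by auto
  have "bipartition_hyperplane c \<noteq> bipartition_hyperplane d"
    using cd inj_on_bipartition_hyperplane by (auto dest: inj_onD)
  then show "V \<in> veldkamp_lines (set C5_points) C5_lines"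
    unfolding veldkamp_lines_def C5_hyperplanes_eq V veldkamp_line_C5[OF cd, symmetric]
    using cd by blast
qed

definition hyperplane_index :: "nat set \<Rightarrow> nat" where
  "hyperplane_index = inv_into {1..31} bipartition_hyperplane"

lemma bij_betw_hyperplane_index: "bij_betw hyperplane_index C5_hyperplanes {1..31}"
  unfolding hyperplane_index_def C5_hyperplanes_eq
  by (rule bij_betw_inv_into[OF inj_on_imp_bij_betw[OF inj_on_bipartition_hyperplane]])

lemma hyperplane_index_image:
  "S \<subseteq> {1..31} \<Longrightarrow> hyperplane_index ` bipartition_hyperplane ` S = S"
  unfolding hyperplane_index_def image_image
  using inv_into_f_f[OF inj_on_bipartition_hyperplane] by (simp add: subset_iff cong: image_cong)

lemma bij_betw_veldkamp_lines_C5: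
  "bij_betw (\<lambda>V. hyperplane_index ` V) (veldkamp_lines (set C5_points) C5_lines)
     (distinguished_triples 5)"
proof (rule bij_betw_imageI)
  have "V \<subseteq> C5_hyperplanes" if "V \<in> veldkamp_lines (set C5_points) C5_lines" for V
    using that unfolding veldkamp_lines_def veldkamp_line_def by auto
  then show "inj_on (\<lambda>V. hyperplane_index ` V) (veldkamp_lines (set C5_points) C5_lines)"
    using bij_betw_hyperplane_index
    by (auto intro!: inj_onI simp: bij_betw_def inj_on_image_eq_iff)
  define pairs where "pairs = {(c, d). c \<in> {1..31} \<and> d \<in> {1..31} \<and> c \<noteq> (d::nat)}"
  have "distinguished_triples 5 = xor_triple ` pairs"
    unfolding distinguished_triples_eq pairs_def by (rule arg_cong[where f = "image xor_triple"]) auto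
  moreover have "hyperplane_index ` bipartition_hyperplane ` xor_triple p = xor_triple p"
    if "p \<in> pairs" for p
    using that xor_mem_range by (intro hyperplane_index_image) (auto simp: pairs_def)
  ultimately show "(\<lambda>V. hyperplane_index ` V) ` veldkamp_lines (set C5_points) C5_lines =
      distinguished_triples 5"
    unfolding veldkamp_lines_C5 image_image pairs_def[symmetric] by (auto cong: image_cong)
qed

section \<open>The three kinds of hyperplanes\<close>

lemma card_bipartition_hyperplane:
  "card (bipartition_hyperplane c) = length (filter (unseparated c) C5_points)"
  unfolding bipartition_hyperplane_def by (rule distinct_card) (simp add: distinct_C5_points)

lemma bipartition_hyperplane_sizes:
  "{c \<in> {1..31}. card (bipartition_hyperplane c) = 6} = {7, 11, 13, 14, 19, 21, 22, 25, 26, 28}"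
  "{c \<in> {1..31}. card (bipartition_hyperplane c) = 7} =
     {3, 5, 6, 9, 10, 12, 15, 17, 18, 20, 23, 24, 27, 29, 30}"
  "{c \<in> {1..31}. card (bipartition_hyperplane c) = 10} = {1, 2, 4, 8, 16, 31}"
proof -
  have range: "{c \<in> {1..31}. P c} = set (filter P [1..<32])" for P :: "nat \<Rightarrow> bool"
    by auto
  show "{c \<in> {1..31}. card (bipartition_hyperplane c) = 6} = {7, 11, 13, 14, 19, 21, 22, 25, 26, 28}"
    "{c \<in> {1..31}. card (bipartition_hyperplane c) = 7} =
       {3, 5, 6, 9, 10, 12, 15, 17, 18, 20, 23, 24, 27, 29, 30}"
    "{c \<in> {1..31}. card (bipartition_hyperplane c) = 10} = {1, 2, 4, 8, 16, 31}"
    unfolding range card_bipartition_hyperplane unseparated_def point_pair_eq C5_points_eq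
    by code_simp+
qed

lemma hyperplane_index_sizes:
  assumes "{c \<in> {1..31}. card (bipartition_hyperplane c) = k} = K"
  shows "hyperplane_index ` {H \<in> C5_hyperplanes. card H = k} = K"
proof -
  have "{H \<in> C5_hyperplanes. card H = k} =
      bipartition_hyperplane ` {c \<in> {1..31}. card (bipartition_hyperplane c) = k}"
    unfolding C5_hyperplanes_eq by auto
  moreover have "{c \<in> {1..31}. card (bipartition_hyperplane c) = k} \<subseteq> {1..31}"
    by auto
  ultimately show ?thesis
    using hyperplane_index_image assms by simp
qed

lemma C5_hyperplane_of_card:
  assumes "H \<in> C5_hyperplanes" "card H = k"
    and "{c \<in> {1..31}. card (bipartition_hyperplane c) = k} = K"
  obtains c where "c \<in> K" "H = bipartition_hyperplane c"
proof -
  obtain c where "c \<in> {1..31}" "H = bipartition_hyperplane c"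
    using assms(1) by (rule C5_hyperplane_eq_bipartition_hyperplane)
  with assms(2,3) that show thesis by blast
qed

definition lines_within :: "nat \<Rightarrow> (nat \<times> nat) list" where
  "lines_within c = filter (\<lambda>p. list_all (unseparated c) (triple_list p)) C5_line_pairs"

lemma set_lines_within:
  "set (lines_within c) = {p \<in> set C5_line_pairs. xor_triple p \<subseteq> bipartition_hyperplane c}"
  using C5_line_subset
  by (auto simp: lines_within_def bipartition_hyperplane_def list_all_iff subset_iff)

lemma C5_hyperplane_card_6:
  assumes "H \<in> C5_hyperplanes" "card H = 6"
  shows "\<exists>l1\<in>C5_lines. \<exists>l2\<in>C5_lines. l1 \<inter> l2 = {} \<and> H = l1 \<union> l2"
proof -
  obtain c where c: "c \<in> {7, 11, 13, 14, 19, 21, 22, 25, 26, 28}" and H: "H = bipartition_hyperplane c"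
    using assms bipartition_hyperplane_sizes(1) by (rule C5_hyperplane_of_card)
  have "\<forall>c\<in>set [7, 11, 13, 14, 19, 21, 22, 25, 26, 28].
      length (lines_within c) = 2 \<and> distinct (concat (map triple_list (lines_within c)))"
    unfolding lines_within_def unseparated_def point_pair_eq C5_line_pairs_eq by code_simp
  with c have "length (lines_within c) = 2" "distinct (concat (map triple_list (lines_within c)))"
    by auto
  then obtain p q where pq: "lines_within c = [p, q]" "distinct (triple_list p @ triple_list q)"
    by (auto simp: length_Suc_conv numeral_2_eq_2)
  then have lines: "p \<in> set C5_line_pairs" "q \<in> set C5_line_pairs"
    and sub: "xor_triple p \<union> xor_triple q \<subseteq> H"
    using set_lines_within[of c] by (auto simp: H)
  have disjoint: "xor_triple p \<inter> xor_triple q = {}"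
    using pq(2) by simp
  moreover have "card (xor_triple p) = 3" "card (xor_triple q) = 3"
    using lines C5_line_subset by blast+
  ultimately have "card (xor_triple p \<union> xor_triple q) = 6"
    by (simp add: card_Un_disjoint)
  then have "H = xor_triple p \<union> xor_triple q"
    using sub assms(2) card_subset_eq[of H] by (metis card.infinite zero_neq_numeral)
  with disjoint lines show ?thesis by blast
qed

lemma C5_hyperplane_card_7:
  assumes "H \<in> C5_hyperplanes" "card H = 7"
  shows "\<exists>p\<in>set C5_points. H = insert p
    {q \<in> set C5_points. q \<noteq> p \<and> \<not> (\<exists>l\<in>C5_lines. p \<in> l \<and> q \<in> l)}"
proof -
  obtain c where c: "c \<in> {3, 5, 6, 9, 10, 12, 15, 17, 18, 20, 23, 24, 27, 29, 30}"
    and H: "H = bipartition_hyperplane c"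
    using assms bipartition_hyperplane_sizes(2) by (rule C5_hyperplane_of_card)
  have "\<forall>c\<in>set [3, 5, 6, 9, 10, 12, 15, 17, 18, 20, 23, 24, 27, 29, 30].
      filter (unseparated c) C5_points =
      filter (\<lambda>q. q = c \<or> \<not> list_ex (\<lambda>l. c \<in> set l \<and> q \<in> set l) (map triple_list C5_line_pairs))
        C5_points"
    unfolding C5_line_triples_eq unseparated_def point_pair_eq C5_points_eq by code_simp
  moreover have "c \<in> set [3, 5, 6, 9, 10, 12, 15, 17, 18, 20, 23, 24, 27, 29, 30]"
    using c by simp
  ultimately have "filter (unseparated c) C5_points =
      filter (\<lambda>q. q = c \<or> \<not> list_ex (\<lambda>l. c \<in> set l \<and> q \<in> set l) (map triple_list C5_line_pairs))
        C5_points"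
    by (rule bspec)
  then have "H = set (filter (\<lambda>q. q = c \<or>
      \<not> list_ex (\<lambda>l. c \<in> set l \<and> q \<in> set l) (map triple_list C5_line_pairs)) C5_points)"
    by (simp add: H bipartition_hyperplane_def)
  moreover have "c \<in> set C5_points"
    using c by (simp add: set_C5_points)
  ultimately show ?thesis
    by (auto simp: list_ex_iff)
qed

text \<open>For \<open>c = 2\<^sup>m\<close>, \<open>m < 5\<close>, and for \<open>c = 31\<close>, \<open>m = 5\<close>, the hyperplane \<open>H\<^sub>c\<close> consists of the
  pairs avoiding \<open>m\<close>.\<close>
lemma bipartition_hyperplane_G2_5_labels:
  assumes "(c, m) \<in> set [(1, 0), (2, 1), (4, 2), (8, 3), (16, 4), (31, 5)]"
  shows "inj_on (point_label m) (bipartition_hyperplane c)"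
    and "\<forall>a\<in>bipartition_hyperplane c. point_label m a \<subseteq> {1..5} \<and> card (point_label m a) = 2"
    and "length (lines_within c) = 10"
    and "\<forall>p\<in>set (lines_within c).
      \<Union>(point_label m ` xor_triple p) \<subseteq> {1..5} \<and> card (\<Union>(point_label m ` xor_triple p)) = 3"
proof -
  let ?relabel = "\<lambda>m. map_prod (skip_index m) (skip_index m) \<circ> point_pair"
  have "\<forall>(c, m)\<in>set [(1, 0), (2, 1), (4, 2), (8, 3), (16, 4), (31::nat, 5::nat)].
      distinct (map (?relabel m) (filter (unseparated c) C5_points)) \<and>
      (\<forall>a\<in>set (filter (unseparated c) C5_points). fst (?relabel m a) < snd (?relabel m a) \<and>
         point_label m a \<subseteq> {1..5} \<and> card (point_label m a) = 2) \<and>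
      length (lines_within c) = 10 \<and>
      (\<forall>p\<in>set (lines_within c).
         \<Union>(point_label m ` xor_triple p) \<subseteq> {1..5} \<and> card (\<Union>(point_label m ` xor_triple p)) = 3)"
    unfolding lines_within_def point_label_def unseparated_def point_pair_eq
      C5_line_pairs_eq C5_points_eq
    by code_simp
  with assms have labels:
    "distinct (map (?relabel m) (filter (unseparated c) C5_points))"
    "\<forall>a\<in>bipartition_hyperplane c. fst (?relabel m a) < snd (?relabel m a) \<and>
       point_label m a \<subseteq> {1..5} \<and> card (point_label m a) = 2"
    "length (lines_within c) = 10"
    "\<forall>p\<in>set (lines_within c).
       \<Union>(point_label m ` xor_triple p) \<subseteq> {1..5} \<and> card (\<Union>(point_label m ` xor_triple p)) = 3"
    unfolding bipartition_hyperplane_def by fastforce+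
  show "inj_on (point_label m) (bipartition_hyperplane c)"
    unfolding point_label_def comp_assoc
    using labels(1,2) by (intro inj_on_doubleton_comp) (auto simp: distinct_map bipartition_hyperplane_def)
  show "\<forall>a\<in>bipartition_hyperplane c. point_label m a \<subseteq> {1..5} \<and> card (point_label m a) = 2"
    using labels(2) by blast
  show "length (lines_within c) = 10"
    by (fact labels(3))
  show "\<forall>p\<in>set (lines_within c).
      \<Union>(point_label m ` xor_triple p) \<subseteq> {1..5} \<and> card (\<Union>(point_label m ` xor_triple p)) = 3"
    by (fact labels(4))
qed

lemma C5_hyperplane_card_10:
  assumes "H \<in> C5_hyperplanes" "card H = 10"
  shows "incidence_iso H {l \<in> C5_lines. l \<subseteq> H} (\<in>) (G2_points 5) (G2_lines 5) (\<subseteq>)"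
proof -
  obtain c where c: "c \<in> {1, 2, 4, 8, 16, 31}" and H: "H = bipartition_hyperplane c"
    using assms bipartition_hyperplane_sizes(3) by (rule C5_hyperplane_of_card)
  then obtain m :: nat where m: "(c, m) \<in> set [(1, 0), (2, 1), (4, 2), (8, 3), (16, 4), (31, 5)]"
    by auto
  have lines: "{l \<in> C5_lines. l \<subseteq> H} = xor_triple ` set (lines_within c)"
    unfolding set_lines_within H by auto
  have "set (lines_within c) \<subseteq> set C5_line_pairs"
    by (auto simp: lines_within_def)
  then have "card (xor_triple ` set (lines_within c)) = 10"
    using bipartition_hyperplane_G2_5_labels(3)[OF m] distinct_C5_line_pairs C5_line_pairs_sorted
    by (subst card_xor_triples) (auto simp: lines_within_def)
  show ?thesis
    unfolding lines
  proof (rule incidence_iso_G2I[where f = "point_label m"])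
    show "card H = 5 choose 2"
      using assms(2) by (simp add: binomial_Suc_Suc numeral_eq_Suc)
    show "\<forall>l\<in>xor_triple ` set (lines_within c). l \<subseteq> H \<and> card l = 3"
      using C5_line_subset by (auto simp: set_lines_within H)
    show "card (xor_triple ` set (lines_within c)) = 5 choose 3"
      using \<open>card (xor_triple ` set (lines_within c)) = 10\<close> by (simp add: binomial_Suc_Suc numeral_eq_Suc)
  qed (use bipartition_hyperplane_G2_5_labels[OF m] in \<open>auto simp: H\<close>)
qed

theorem mainTheorem3:
  defines "K1 \<equiv> {7, 11, 13, 14, 19, 21, 22, 25, 26, 28} :: nat set"
      and "K2 \<equiv> {3, 5, 6, 9, 10, 12, 15, 17, 18, 20, 23, 24, 27, 29, 30} :: nat set"
      and "K3 \<equiv> {1, 2, 4, 8, 16, 31} :: nat set"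
      and "D \<equiv> defective_triples 5"
      and "L \<equiv> {T \<in> defective_triples 5. T \<subseteq> {3, 5, 6, 9, 10, 12, 15, 17, 18, 20, 23, 24, 27, 29, 30}}"
  shows
    \<comment> \<open>(i)\<close>
    "K1 \<union> K2 \<union> K3 = {1..31} \<and> K1 \<inter> K2 = {} \<and> K1 \<inter> K3 = {} \<and> K2 \<inter> K3 = {} \<and>
     (\<forall>a\<in>K1. card {T \<in> D. a \<in> T} = 9) \<and>
     (\<forall>a\<in>K2. card {T \<in> D. a \<in> T} = 7) \<and>
     (\<forall>a\<in>K3. card {T \<in> D. a \<in> T} = 0) \<and>
    \<comment> \<open>(ii)\<close>
     is_configuration K2 L 15 4 20 3 \<and>
     incidence_iso K2 L (\<in>) (G2_points 6) (G2_lines 6) (\<subseteq>) \<and>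
    \<comment> \<open>(iii)\<close>
     (\<exists>\<phi>. bij_betw \<phi> (geom_hyperplanes K2 L) {1..31} \<and>
        bij_betw (\<lambda>V. \<phi> ` V) (veldkamp_lines K2 L) (distinguished_triples 5) \<and>
        \<phi> ` {H \<in> geom_hyperplanes K2 L. card H = 6} = K1 \<and>
        \<phi> ` {H \<in> geom_hyperplanes K2 L. card H = 7} = K2 \<and>
        \<phi> ` {H \<in> geom_hyperplanes K2 L. card H = 10} = K3) \<and>
     (\<forall>H \<in> geom_hyperplanes K2 L. card H = 6 \<longrightarrow>
        (\<exists>l1\<in>L. \<exists>l2\<in>L. l1 \<inter> l2 = {} \<and> H = l1 \<union> l2)) \<and>
     (\<forall>H \<in> geom_hyperplanes K2 L. card H = 7 \<longrightarrow>
        (\<exists>p\<in>K2. H = insert p {q \<in> K2. q \<noteq> p \<and> \<not> (\<exists>l\<in>L. p \<in> l \<and> q \<in> l)})) \<and>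
     (\<forall>H \<in> geom_hyperplanes K2 L. card H = 10 \<longrightarrow>
        incidence_iso H {l \<in> L. l \<subseteq> H} (\<in>) (G2_points 5) (G2_lines 5) (\<subseteq>))"
proof -
  have K2: "K2 = set C5_points"
    by (simp add: K2_def set_C5_points)
  have L: "L = C5_lines"
    unfolding L_def set_C5_points[symmetric] by (rule defective_triples_within_C5_points)
  have partition:
    "{7, 11, 13, 14, 19, 21, 22, 25, 26, 28} \<union> set C5_points \<union> {1, 2, 4, 8, 16, 31} = {1..31::nat}"
    by (simp add: set_C5_points atLeastAtMost_upt upt_rec set_eq_subset)
  have disjoint: "{7, 11, 13, 14, 19, 21, 22, 25, 26, 28} \<inter> set C5_points = {}"
    "{7, 11, 13, 14, 19, 21, 22, 25, 26, 28} \<inter> {1, 2, 4, 8, 16, 31::nat} = {}"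
    "set C5_points \<inter> {1, 2, 4, 8, 16, 31} = {}"
    by (simp_all add: set_C5_points)
  show ?thesis
    unfolding K1_def K3_def D_def K2 L
    by (intro conjI exI[of _ hyperplane_index])
      (fact partition disjoint card_defective_triples_5_through[folded set_C5_points]
         C5_is_configuration C5_iso_G2_6 bij_betw_hyperplane_index bij_betw_veldkamp_lines_C5
         hyperplane_index_sizes[OF bipartition_hyperplane_sizes(1)]
         hyperplane_index_sizes[OF bipartition_hyperplane_sizes(2)[folded set_C5_points]]
         hyperplane_index_sizes[OF bipartition_hyperplane_sizes(3)] |
       blast intro: C5_hyperplane_card_6 C5_hyperplane_card_7 C5_hyperplane_card_10)+
qed

end
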